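(* For every $a\leq 0$ there exists a divergent series of positive real terms $\sum_{n=1}^{\infty}x_n$ such that $\{\sum_{n=1}^{\infty}(x_n-x_{\sigma(n)}) : \sigma\in S_\infty,\ \sum_{n=1}^{\infty}(x_n-x_{\sigma(n)})\text{ converges}\}=[a,\infty)$.
   Context: $S_\infty$ denotes the set of all permutations of $\mathbb{N}$. *)

theory Defs
  imports "HOL-Analysis.Analysis"
begin

end

theory Submission
  imports Defs
begin

text \<open>
Group the positions \<open>p\<close> into consecutive blocks, block \<open>k\<close> having \<open>2(k+1)\<^sup>2\<close> positions,
and pair the \<open>l\<close>-th even position of block \<open>k\<close> with the \<open>l\<close>-th odd position of block \<open>k+1\<close>.
Reading an index \<open>n\<close> as the position \<open>n div 2\<close> plus a bit gives two families of pairs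
\<open>{n, mate n}\<close> of indices, with \<open>n\<close> odd or even. The sequence is constant on each pair up to a
small perturbation, and values on different pairs are at least \<open>1\<close> apart and grow linearly,
so the series diverges. The perturbation makes swapping a pair from block \<open>k\<close> change the sum
by \<open>1/(k+1)\<close> (odd family) or by \<open>-|a|/(k+1)\<^sup>2\<close> (even family).

If \<open>\<Sum>(x n - x (\<sigma> n))\<close> converges, its terms eventually lie below \<open>1\<close>, so \<open>\<sigma>\<close> eventually
fixes or swaps every pair, and the \<open>N\<close>-th partial sum is the total gain of the swapped pairs
straddling \<open>N\<close>. Only about \<open>(k+1)\<^sup>2\<close> pairs of the even family straddle \<open>N\<close>, so the
partial sums are at least \<open>a - o(1)\<close>. Conversely, swapping all pairs of the even family and
the first \<open>\<lfloor>t (k+1)\<rfloor>\<close> pairs of the odd family in each block \<open>k\<close> makes the partial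
sums converge to \<open>a + t\<close>.
\<close>

lemma sum_diff_comp_inj:
  fixes f :: "'a \<Rightarrow> 'b::ab_group_add"
  assumes "inj \<sigma>" "finite A"
  shows "(\<Sum>n\<in>A. f n - f (\<sigma> n)) = sum f (A - \<sigma> ` A) - sum f (\<sigma> ` A - A)"
proof -
  have "(\<Sum>n\<in>A. f (\<sigma> n)) = sum f (\<sigma> ` A)"
    using assms(1) by (simp add: sum.reindex inj_on_subset)
  moreover have "sum f A = sum f (A \<inter> \<sigma> ` A) + sum f (A - \<sigma> ` A)"
    using assms(2) by (rule sum.Int_Diff)
  moreover have "sum f (\<sigma> ` A) = sum f (\<sigma> ` A \<inter> A) + sum f (\<sigma> ` A - A)"
    using assms(2) by (intro sum.Int_Diff) simp
  ultimately show ?thesis by (simp add: sum_subtractf Int_commute)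
qed

lemma image_lessThan_diff_eq_swapped:
  fixes \<sigma> m :: "nat \<Rightarrow> nat"
  assumes local: "\<And>n. K \<le> n \<Longrightarrow> \<sigma> n = n \<or> \<sigma> n = m n"
    and large: "\<And>i. i < K \<Longrightarrow> \<sigma> i < N"
  shows "\<sigma> ` {..<N} - {..<N} = m ` {i. i < N \<and> \<sigma> i = m i \<and> N \<le> m i}"
proof (intro equalityI subsetI)
  fix j assume "j \<in> \<sigma> ` {..<N} - {..<N}"
  then obtain i where i: "i < N" "\<sigma> i = j" "N \<le> j" by auto
  then have "\<not> i < K" using large[of i] by auto
  then have "\<sigma> i = m i" using local[of i] i by auto
  with i show "j \<in> m ` {i. i < N \<and> \<sigma> i = m i \<and> N \<le> m i}" by auto
qed (auto intro: rev_image_eqI)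

lemma lessThan_diff_image_eq_swapped:
  fixes \<sigma> m :: "nat \<Rightarrow> nat"
  assumes bij: "bij \<sigma>" and inv: "\<And>n. m (m n) = n"
    and local: "\<And>n. K \<le> n \<Longrightarrow> \<sigma> n = n \<or> \<sigma> n = m n"
    and large: "\<And>i. i < K \<Longrightarrow> i < N \<and> m i < N \<and> m (\<sigma> i) < N"
  shows "{..<N} - \<sigma> ` {..<N} = {i. i < N \<and> \<sigma> i = m i \<and> N \<le> m i}"
proof (intro equalityI subsetI)
  fix i assume i: "i \<in> {..<N} - \<sigma> ` {..<N}"
  obtain j where j: "\<sigma> j = i" using bij by (metis bij_pointE)
  with i have "N \<le> j" by (metis DiffD2 imageI lessThan_iff not_le)
  then have "K \<le> j" using large[of j] by fastforce
  with i j local \<open>N \<le> j\<close> have "i = m j" by force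
  then have "N \<le> m i" using \<open>N \<le> j\<close> inv by simp
  have "\<sigma> i \<noteq> i"
    using j i \<open>N \<le> j\<close> bij_is_inj[OF bij] by (metis DiffD1 injD lessThan_iff not_le)
  moreover have "K \<le> i" using large[of i] \<open>N \<le> m i\<close> by fastforce
  ultimately have "\<sigma> i = m i" using local by blast
  with i \<open>N \<le> m i\<close> show "i \<in> {i. i < N \<and> \<sigma> i = m i \<and> N \<le> m i}" by auto
next
  fix i assume i: "i \<in> {i. i < N \<and> \<sigma> i = m i \<and> N \<le> m i}"
  have "m i < N" if "i' < N" "\<sigma> i' = i" for i'
  proof (cases "i' < K")
    case True
    then show ?thesis using large[of i'] that by simp
  next
    case False
    then have "\<sigma> i' = i' \<or> \<sigma> i' = m i'" using local by simp
    then show ?thesis using i that inv by auto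
  qed
  with i show "i \<in> {..<N} - \<sigma> ` {..<N}" by fastforce
qed

lemma eventually_partial_sum_eq_swapped_pairs:
  fixes \<sigma> m :: "nat \<Rightarrow> nat" and f :: "nat \<Rightarrow> 'a::ab_group_add"
  assumes bij: "bij \<sigma>" and inv: "\<And>n. m (m n) = n"
    and local: "eventually (\<lambda>n. \<sigma> n = n \<or> \<sigma> n = m n) sequentially"
  shows "eventually (\<lambda>N. (\<Sum>n<N. f n - f (\<sigma> n)) =
    (\<Sum>i | i < N \<and> \<sigma> i = m i \<and> N \<le> m i. f i - f (m i))) sequentially"
proof -
  obtain K where K: "\<And>n. K \<le> n \<Longrightarrow> \<sigma> n = n \<or> \<sigma> n = m n"
    using local unfolding eventually_sequentially by blast
  define M where "M = Suc (\<Sum>i<K. i + \<sigma> i + m i + m (\<sigma> i))"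
  show ?thesis
  proof (rule eventually_sequentiallyI[of M])
    fix N assume N: "M \<le> N"
    let ?W = "{i. i < N \<and> \<sigma> i = m i \<and> N \<le> m i}"
    have bound: "i + \<sigma> i + m i + m (\<sigma> i) < N" if "i < K" for i
    proof -
      have "i + \<sigma> i + m i + m (\<sigma> i) \<le> (\<Sum>i<K. i + \<sigma> i + m i + m (\<sigma> i))"
        using that by (intro member_le_sum) auto
      then show ?thesis using N unfolding M_def by linarith
    qed
    have "i < N \<and> m i < N \<and> m (\<sigma> i) < N" "\<sigma> i < N" if "i < K" for i
      using bound[OF that] by linarith+
    note across = lessThan_diff_image_eq_swapped[OF bij inv K this(1)]
      image_lessThan_diff_eq_swapped[OF K this(2)]
    have "inj m" by (metis inv injI)
    have "(\<Sum>n<N. f n - f (\<sigma> n)) = sum f ?W - sum f (m ` ?W)"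
      using sum_diff_comp_inj[OF bij_is_inj[OF bij] finite_lessThan, of f] by (simp only: across)
    also have "sum f (m ` ?W) = (\<Sum>i\<in>?W. f (m i))"
      using sum.reindex[OF inj_on_subset[OF \<open>inj m\<close> subset_UNIV]] by (simp add: comp_def)
    finally show "(\<Sum>n<N. f n - f (\<sigma> n)) = (\<Sum>i\<in>?W. f i - f (m i))"
      by (simp add: sum_subtractf)
  qed
qed

lemma sum_split_parity:
  fixes f :: "nat \<Rightarrow> 'a::comm_monoid_add"
  assumes "finite W"
  shows "sum f W = (\<Sum>p | 2 * p \<in> W. f (2 * p)) + (\<Sum>p | 2 * p + 1 \<in> W. f (2 * p + 1))"
proof -
  let ?E = "{p. 2 * p \<in> W}" and ?O = "{p. 2 * p + 1 \<in> W}"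
  have W: "W = (\<lambda>p. 2 * p) ` ?E \<union> (\<lambda>p. 2 * p + 1) ` ?O"
  proof (intro equalityI subsetI)
    fix i assume "i \<in> W"
    then show "i \<in> (\<lambda>p. 2 * p) ` ?E \<union> (\<lambda>p. 2 * p + 1) ` ?O"
      by (cases "even i") (auto elim!: evenE oddE)
  qed auto
  have "finite ?E" "finite ?O"
    using assms by (auto intro: finite_vimageI[unfolded vimage_def] simp: inj_on_def)
  then have "sum f W = sum f ((\<lambda>p. 2 * p) ` ?E) + sum f ((\<lambda>p. 2 * p + 1) ` ?O)"
    by (subst W, intro sum.union_disjoint) (auto, presburger)
  then show ?thesis by (simp add: sum.reindex inj_on_def)
qed

lemma double_vs_half:
  fixes p q N :: nat
  shows "2 * p < N \<longleftrightarrow> p < (N + 1) div 2" "N \<le> 2 * q \<longleftrightarrow> (N + 1) div 2 \<le> q"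
    and "2 * p + 1 < N \<longleftrightarrow> p < N div 2" "N \<le> 2 * q + 1 \<longleftrightarrow> N div 2 \<le> q"
  by presburger+

lemma filterlim_half_at_top: "filterlim (\<lambda>N::nat. (N + c) div 2) at_top at_top"
  using filterlim_compose[OF filterlim_at_top_div_const_nat[of 2] filterlim_add_const_nat_at_top]
  by simp

lemma min_mult_diff_bound:
  fixes c c' :: real and D D' h :: nat
  assumes "0 \<le> c'" "c' \<le> c"
  shows "\<bar>c' * min D' h - c * min D h\<bar> \<le> \<bar>c' * D' - c * D\<bar> + (c - c') * D"
proof (cases "h \<le> D")
  case True
  note hD = True
  show ?thesis
  proof (cases "h \<le> D'")
    case True
    have m: "min D' h = h" "min D h = h" using True hD by auto
    have "(c - c') * h \<le> (c - c') * D" using hD assms by (intro mult_left_mono) auto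
    moreover have "0 \<le> (c - c') * h" using assms by simp
    moreover have "c' * h \<le> c * h" using assms by (intro mult_right_mono) auto
    moreover have "(c - c') * h = c * h - c' * h" by (simp add: algebra_simps)
    ultimately show ?thesis unfolding m by linarith
  next
    case False
    have m: "min D' h = D'" "min D h = h" using False hD by auto
    have a: "c * h \<le> c * D" using hD assms by (intro mult_left_mono) auto
    have b: "c' * D' \<le> c' * h" using False assms by (intro mult_left_mono) auto
    have b2: "c' * h \<le> c * h" using assms by (intro mult_right_mono) auto
    have "0 \<le> (c - c') * D" using assms by simp
    then show ?thesis unfolding m using a b b2 by linarith
  qed
next
  case False
  note hD = False
  show ?thesis
  proof (cases "h \<le> D'")
    case True
    have m: "min D' h = h" "min D h = D" using True hD by auto
    have a: "c' * D \<le> c' * h" using hD assms by (intro mult_left_mono) auto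
    have b: "c' * h \<le> c' * D'" using True assms by (intro mult_left_mono) auto
    have "0 \<le> (c - c') * D" using assms by simp
    moreover have "(c - c') * D = c * D - c' * D" by (simp add: algebra_simps)
    ultimately show ?thesis unfolding m using a b by linarith
  next
    case False
    have m: "min D' h = D'" "min D h = D" using False hD by auto
    have "0 \<le> (c - c') * D" using assms by simp
    then show ?thesis unfolding m by linarith
  qed
qed

lemma straddle_formula_bound:
  fixes c c' L :: real and D D' h h' :: nat
  assumes "0 \<le> c'" "c' \<le> c" "h \<le> h'" "h' \<le> Suc h"
  shows "\<bar>c * real (D - h) + c' * real (min D' h') - L\<bar> \<le>
     \<bar>c * D - L\<bar> + c' + \<bar>c' * D' - c * D\<bar> + (c - c') * D"
proof -
  have "c * real (D - h) = c * real D - c * real (min D h)"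
    by (simp add: min_def of_nat_diff algebra_simps)
  moreover have "c' * real (min D' h) \<le> c' * real (min D' h')"
    using assms by (intro mult_left_mono) auto
  moreover have "c' * real (min D' h') \<le> c' * (real (min D' h) + 1)"
    using assms by (intro mult_left_mono) (auto simp: min_def)
  moreover have "\<bar>c' * min D' h - c * min D h\<bar> \<le> \<bar>c' * D' - c * D\<bar> + (c - c') * D"
    using min_mult_diff_bound assms by blast
  ultimately show ?thesis by (simp add: algebra_simps) linarith
qed

fun block_start :: "nat \<Rightarrow> nat" where
  "block_start 0 = 0"
| "block_start (Suc k) = block_start k + 2 * (Suc k)^2"

lemma even_block_start: "even (block_start k)"
  by (induction k) auto

lemma block_start_mono: "k \<le> j \<Longrightarrow> block_start k \<le> block_start j"
  by (induction j) (auto simp: le_Suc_eq)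

lemma block_start_ge: "2 * k \<le> block_start k"
proof (induction k)
  case (Suc k)
  have "(1::nat) \<le> (Suc k)^2" by simp
  with Suc have "2 * k + 2 \<le> block_start k + 2 * (Suc k)^2" by linarith
  then show ?case by simp
qed simp

lemma block_start_Suc_le: "k < j \<Longrightarrow> block_start (Suc k) \<le> block_start j"
  using block_start_mono[of "Suc k" j] by simp

definition block_of :: "nat \<Rightarrow> nat" where
  "block_of p = (LEAST k. p < block_start (Suc k))"

lemma block_of_bounds: "block_start (block_of p) \<le> p" "p < block_start (Suc (block_of p))"
proof -
  have "p < block_start (Suc p)" using block_start_ge[of "Suc p"] by simp
  then show upper: "p < block_start (Suc (block_of p))"
    unfolding block_of_def by (rule LeastI)
  show "block_start (block_of p) \<le> p"
  proof (cases "block_of p")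
    case (Suc j)
    then have "\<not> p < block_start (Suc j)"
      unfolding block_of_def by (metis lessI not_less_Least)
    with Suc show ?thesis by simp
  qed simp
qed

lemma block_of_eqI:
  assumes "block_start k \<le> p" "p < block_start (Suc k)"
  shows "block_of p = k"
proof (rule ccontr)
  assume "block_of p \<noteq> k"
  then consider "block_of p < k" | "k < block_of p" by linarith
  then show False
  proof cases
    case 1
    then have "block_start (Suc (block_of p)) \<le> block_start k" by (rule block_start_Suc_le)
    with assms block_of_bounds[of p] show False by linarith
  next
    case 2
    then have "block_start (Suc k) \<le> block_start (block_of p)" by (rule block_start_Suc_le)
    with assms block_of_bounds[of p] show False by linarith
  qed
qed

lemma block_of_tendsto: "filterlim block_of at_top sequentially"
  unfolding filterlim_at_top
proof (intro allI eventually_sequentiallyI)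
  fix k p assume p: "block_start k \<le> p"
  show "k \<le> block_of p"
  proof (rule ccontr)
    assume "\<not> k \<le> block_of p"
    then have "block_start (Suc (block_of p)) \<le> block_start k"
      by (intro block_start_Suc_le) simp
    with p block_of_bounds(2)[of p] show False by linarith
  qed
qed

lemma block_decomp:
  obtains r where "p = block_start (block_of p) + r" "r < 2 * (Suc (block_of p))^2"
  using block_of_bounds[of p] by (metis block_start.simps(2) add_less_cancel_left le_Suc_ex)

lemma even_decomp:
  assumes "even p"
  obtains l where "p = block_start (block_of p) + 2 * l" "l < (Suc (block_of p))^2"
proof -
  obtain r where r: "p = block_start (block_of p) + r" "r < 2 * (Suc (block_of p))^2"
    by (rule block_decomp)
  with assms even_block_start have "even r" by (metis even_add)
  with r that show ?thesis by auto
qed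

lemma block_of_even: "l < (Suc k)^2 \<Longrightarrow> block_of (block_start k + 2 * l) = k"
  by (rule block_of_eqI) auto

lemma Suc_square_le: "(Suc k)^2 \<le> (Suc (Suc k))^2"
  by (simp add: power_mono)

lemma block_of_odd:
  assumes "l < (Suc k)^2"
  shows "block_of (block_start (Suc k) + 2 * l + 1) = Suc k"
proof (rule block_of_eqI)
  from assms Suc_square_le[of k] have "2 * l + 1 < 2 * (Suc (Suc k))^2" by linarith
  then show "block_start (Suc k) + 2 * l + 1 < block_start (Suc (Suc k))" by simp
qed simp

text \<open>The \<open>l\<close>-th even position of block \<open>k\<close> and the \<open>l\<close>-th odd position of block \<open>k+1\<close>
are partners; odd positions \<open>block_start k + 2 l + 1\<close> with \<open>l \<ge> k\<^sup>2\<close> are their own partners.\<close>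

definition partner :: "nat \<Rightarrow> nat" where
  "partner p = (let k = block_of p; r = p - block_start k in
     if even p then block_start (Suc k) + r + 1
     else if 0 < k \<and> r div 2 < k^2 then block_start (k - 1) + r - 1 else p)"

lemma partner_even:
  "l < (Suc k)^2 \<Longrightarrow> partner (block_start k + 2 * l) = block_start (Suc k) + 2 * l + 1"
  unfolding partner_def Let_def using block_of_even[of l k] even_block_start[of k] by auto

lemma partner_odd:
  "l < (Suc k)^2 \<Longrightarrow> partner (block_start (Suc k) + 2 * l + 1) = block_start k + 2 * l"
  unfolding partner_def Let_def using block_of_odd[of l k] even_block_start[of "Suc k"] by auto

lemma partner_odd_cases:
  assumes "odd p"
  obtains "partner p = p" | k l where "l < (Suc k)^2" "p = block_start (Suc k) + 2 * l + 1"
proof -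
  obtain r where r: "p = block_start (block_of p) + r" "r < 2 * (Suc (block_of p))^2"
    by (rule block_decomp)
  with assms even_block_start have "odd r" by (metis even_add)
  then obtain l where l: "r = 2 * l + 1" by (metis oddE)
  show ?thesis
  proof (cases "0 < block_of p \<and> l < (block_of p)^2")
    case True
    then obtain k where "block_of p = Suc k" by (metis gr0_implies_Suc)
    with True r l that(2) show ?thesis by auto
  next
    case False
    with assms r l have "partner p = p" unfolding partner_def Let_def by auto
    then show ?thesis by (rule that(1))
  qed
qed

lemma partner_partner: "partner (partner p) = p"
proof (cases "even p")
  case True
  then obtain l where "p = block_start (block_of p) + 2 * l" "l < (Suc (block_of p))^2"
    by (rule even_decomp)
  then show ?thesis by (metis partner_even partner_odd)
next
  case False
  then show ?thesis by (cases rule: partner_odd_cases) (simp, metis partner_even partner_odd)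
qed

lemma partner_even_props:
  assumes "even p"
  shows "p < partner p" "odd (partner p)" "block_of (partner p) = Suc (block_of p)"
proof -
  obtain l where l: "p = block_start (block_of p) + 2 * l" "l < (Suc (block_of p))^2"
    using assms by (rule even_decomp)
  then have pp: "partner p = block_start (Suc (block_of p)) + 2 * l + 1" by (metis partner_even)
  with l show "p < partner p" by simp
  from pp even_block_start show "odd (partner p)" by simp
  from pp l show "block_of (partner p) = Suc (block_of p)" by (metis block_of_odd)
qed

lemma partner_odd_le:
  assumes "odd p"
  shows "partner p \<le> p"
  using assms
proof (cases rule: partner_odd_cases)
  case (2 k l)
  then show ?thesis using partner_odd[of l k] block_start_mono[of k "Suc k"] by simp
qed simp

lemma less_partner_iff: "p < partner p \<longleftrightarrow> even p"
  by (metis partner_even_props(1) partner_odd_le not_le)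

definition slot :: "nat \<Rightarrow> nat" where
  "slot p = (p - block_start (block_of p)) div 2"

lemma slot_even: "l < (Suc k)^2 \<Longrightarrow> slot (block_start k + 2 * l) = l"
  unfolding slot_def using block_of_even by simp

definition straddle_sum :: "(nat \<Rightarrow> real) \<Rightarrow> (nat \<Rightarrow> bool) \<Rightarrow> nat \<Rightarrow> real" where
  "straddle_sum c sel T = (\<Sum>p | p < T \<and> even p \<and> sel p \<and> T \<le> partner p. c (block_of p))"

definition capped :: "(nat \<Rightarrow> nat) \<Rightarrow> nat \<Rightarrow> nat" where
  "capped D k = min (D k) ((Suc k)^2)"

lemma straddles_even_slot_iff:
  assumes l: "l < (Suc j)^2" and r: "r < 2 * (Suc (Suc k))^2"
  shows "block_start j + 2 * l < block_start (Suc k) + r \<and>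
      block_start (Suc k) + r \<le> partner (block_start j + 2 * l) \<longleftrightarrow>
    (j = k \<and> r div 2 \<le> l) \<or> (j = Suc k \<and> l < (r + 1) div 2)"
proof -
  have pp: "partner (block_start j + 2 * l) = block_start (Suc j) + 2 * l + 1"
    using partner_even[OF l] .
  consider "j < k" | "j = k" | "j = Suc k" | "Suc k < j" by linarith
  then show ?thesis
  proof cases
    case 1
    then have "block_start (Suc (Suc j)) \<le> block_start (Suc k)"
      by (intro block_start_Suc_le) simp
    moreover have "block_start (Suc j) + 2 * l + 1 < block_start (Suc (Suc j))"
      using block_of_bounds(2)[of "block_start (Suc j) + 2 * l + 1"] block_of_odd[OF l] by simp
    ultimately show ?thesis unfolding pp using 1 by auto
  next
    case 2
    with l show ?thesis unfolding pp block_start.simps(2)[of k] by auto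
  next
    case 3
    with r show ?thesis unfolding pp block_start.simps(2)[of "Suc k"] by auto
  next
    case 4
    then have "block_start (Suc (Suc k)) \<le> block_start j" by (rule block_start_Suc_le)
    with r have "block_start (Suc k) + r < block_start j" by simp
    with 4 show ?thesis by auto
  qed
qed

lemma straddling_set_eq:
  assumes sel: "\<And>p. even p \<Longrightarrow> sel p \<longleftrightarrow> slot p < D (block_of p)"
    and r: "r < 2 * (Suc (Suc k))^2"
  shows "{p. p < block_start (Suc k) + r \<and> even p \<and> sel p \<and> block_start (Suc k) + r \<le> partner p} =
     (\<lambda>l. block_start k + 2 * l) ` {r div 2 ..< capped D k} \<union>
     (\<lambda>l. block_start (Suc k) + 2 * l) ` {..< min (capped D (Suc k)) ((r + 1) div 2)}"
    (is "?A = ?B")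
proof
  show "?A \<subseteq> ?B"
  proof
    fix p assume "p \<in> ?A"
    then have p: "even p" "sel p" by auto
    obtain l where l: "p = block_start (block_of p) + 2 * l" "l < (Suc (block_of p))^2"
      using even_decomp[OF p(1)] by metis
    with sel[OF p(1)] p(2) slot_even[OF l(2)] have "l < capped D (block_of p)"
      unfolding capped_def by simp
    with \<open>p \<in> ?A\<close> l straddles_even_slot_iff[OF l(2) r] show "p \<in> ?B" by auto
  qed
next
  show "?B \<subseteq> ?A"
  proof
    fix p assume "p \<in> ?B"
    then obtain j l where p: "p = block_start j + 2 * l" "l < capped D j"
        and j: "(j = k \<and> r div 2 \<le> l) \<or> (j = Suc k \<and> l < (r + 1) div 2)"
      by (auto simp del: block_start.simps)
    then have l: "l < (Suc j)^2" "l < D j" unfolding capped_def by auto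
    have "even p" using p(1) even_block_start by simp
    moreover from this have "sel p" using sel p(1) slot_even[OF l(1)] block_of_even[OF l(1)] l(2) by simp
    ultimately show "p \<in> ?A" using straddles_even_slot_iff[OF l(1) r] j p(1) by simp
  qed
qed

lemma straddle_sum_eq:
  assumes sel: "\<And>p. even p \<Longrightarrow> sel p \<longleftrightarrow> slot p < D (block_of p)"
    and r: "r < 2 * (Suc (Suc k))^2"
  shows "straddle_sum c sel (block_start (Suc k) + r) =
     c k * real (capped D k - r div 2) + c (Suc k) * real (min (capped D (Suc k)) ((r + 1) div 2))"
proof -
  let ?f = "\<lambda>l. block_start k + 2 * l" and ?g = "\<lambda>l. block_start (Suc k) + 2 * l"
  let ?I = "{r div 2 ..< capped D k}" and ?J = "{..< min (capped D (Suc k)) ((r + 1) div 2)}"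
  have I: "l < (Suc k)^2" if "l \<in> ?I" for l using that unfolding capped_def by auto
  have J: "l < (Suc (Suc k))^2" if "l \<in> ?J" for l using that unfolding capped_def by auto
  have disjoint: "?f ` ?I \<inter> ?g ` ?J = {}"
  proof -
    have "?f l \<noteq> ?g l'" if "l \<in> ?I" for l l' using I[OF that] by simp
    then show ?thesis by blast
  qed
  have "straddle_sum c sel (block_start (Suc k) + r) = (\<Sum>p \<in> ?f ` ?I \<union> ?g ` ?J. c (block_of p))"
    unfolding straddle_sum_def using straddling_set_eq[OF sel r] by simp
  also have "\<dots> = (\<Sum>p \<in> ?f ` ?I. c (block_of p)) + (\<Sum>p \<in> ?g ` ?J. c (block_of p))"
    using disjoint by (intro sum.union_disjoint) auto
  also have "(\<Sum>p \<in> ?f ` ?I. c (block_of p)) = (\<Sum>l \<in> ?I. c (block_of (?f l)))"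
    by (rule sum.reindex_cong[where l = ?f]) (auto simp: inj_on_def)
  also have "\<dots> = (\<Sum>l \<in> ?I. c k)"
    using I block_of_even by (intro sum.cong) auto
  also have "(\<Sum>p \<in> ?g ` ?J. c (block_of p)) = (\<Sum>l \<in> ?J. c (block_of (?g l)))"
    by (rule sum.reindex_cong[where l = ?g]) (auto simp: inj_on_def)
  also have "\<dots> = (\<Sum>l \<in> ?J. c (Suc k))"
    using J block_of_even[of _ "Suc k"] by (intro sum.cong) auto
  finally show ?thesis by (simp add: mult.commute)
qed

lemma straddle_sum_nonneg: "(\<And>k. 0 \<le> c k) \<Longrightarrow> 0 \<le> straddle_sum c sel T"
  unfolding straddle_sum_def by (intro sum_nonneg) auto

lemma straddle_sum_mono_sel:
  assumes "\<And>k. 0 \<le> c k" "\<And>p. sel p \<Longrightarrow> sel' p"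
  shows "straddle_sum c sel T \<le> straddle_sum c sel' T"
  unfolding straddle_sum_def using assms by (intro sum_mono2) auto

lemma straddle_sum_dist_le:
  fixes c :: "nat \<Rightarrow> real"
  assumes sel: "\<And>p. even p \<Longrightarrow> sel p \<longleftrightarrow> slot p < D (block_of p)"
    and c_nonneg: "\<And>k. 0 \<le> c k" and c_decr: "\<And>k. c (Suc k) \<le> c k"
    and k: "block_of T = Suc k"
  shows "\<bar>straddle_sum c sel T - L\<bar> \<le> \<bar>c k * capped D k - L\<bar> + c (Suc k)
    + \<bar>c (Suc k) * capped D (Suc k) - c k * capped D k\<bar> + (c k - c (Suc k)) * capped D k"
proof -
  define r where "r = T - block_start (Suc k)"
  have "block_start (Suc k) \<le> T" "T < block_start (Suc (Suc k))"
    using block_of_bounds[of T] unfolding k by blast+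
  moreover note block_start.simps(2)[of "Suc k"]
  ultimately have T_eq: "T = block_start (Suc k) + r" and r: "r < 2 * (Suc (Suc k))^2"
    unfolding r_def by linarith+
  have "straddle_sum c sel T = c k * real (capped D k - r div 2)
      + c (Suc k) * real (min (capped D (Suc k)) ((r + 1) div 2))"
    by (subst T_eq) (rule straddle_sum_eq[OF sel r])
  also have "\<bar>\<dots> - L\<bar> \<le> \<bar>c k * capped D k - L\<bar> + c (Suc k)
      + \<bar>c (Suc k) * capped D (Suc k) - c k * capped D k\<bar> + (c k - c (Suc k)) * capped D k"
    by (rule straddle_formula_bound) (use c_nonneg c_decr in auto)
  finally show ?thesis .
qed

text \<open>A pair from block \<open>k\<close> straddles \<open>T\<close> only if \<open>T\<close> lies in block \<open>k\<close> or \<open>k+1\<close>, so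
  \<open>straddle_sum\<close> is governed by the two products \<open>c k * capped D k\<close>.\<close>

lemma straddle_sum_tendsto:
  fixes c :: "nat \<Rightarrow> real"
  assumes sel: "\<And>p. even p \<Longrightarrow> sel p \<longleftrightarrow> slot p < D (block_of p)"
    and c_nonneg: "\<And>k. 0 \<le> c k" and c_decr: "\<And>k. c (Suc k) \<le> c k"
    and c_lim: "c \<longlonglongrightarrow> 0"
    and prod_lim: "(\<lambda>k. c k * capped D k) \<longlonglongrightarrow> L"
    and diff_lim: "(\<lambda>k. (c k - c (Suc k)) * capped D k) \<longlonglongrightarrow> 0"
  shows "straddle_sum c sel \<longlonglongrightarrow> L"
proof -
  define e where "e k = \<bar>c k * capped D k - L\<bar> + c (Suc k)
      + \<bar>c (Suc k) * capped D (Suc k) - c k * capped D k\<bar> + (c k - c (Suc k)) * capped D k" for k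
  have "(\<lambda>k. c k * capped D k - L) \<longlonglongrightarrow> 0"
    using tendsto_diff[OF prod_lim tendsto_const[of L]] by simp
  moreover have "(\<lambda>k. c (Suc k) * capped D (Suc k) - c k * capped D k) \<longlonglongrightarrow> 0"
    using tendsto_diff[OF LIMSEQ_Suc[OF prod_lim] prod_lim] by simp
  ultimately have "e \<longlonglongrightarrow> 0 + 0 + 0 + 0"
    unfolding e_def by (intro tendsto_add tendsto_rabs_zero LIMSEQ_Suc[OF c_lim] diff_lim)
  then have "(\<lambda>T. e (block_of T - 1)) \<longlonglongrightarrow> 0"
    by (intro filterlim_compose[OF _ filterlim_compose[OF filterlim_minus_const_nat_at_top
          block_of_tendsto]]) simp
  moreover have "eventually (\<lambda>T. norm (straddle_sum c sel T - L) \<le> e (block_of T - 1)) sequentially"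
  proof (rule eventually_sequentiallyI[of "block_start 1"])
    fix T assume "block_start 1 \<le> T"
    then have "block_of T \<noteq> 0" using block_of_bounds(2)[of T] by (intro notI) simp
    then obtain k where k: "block_of T = Suc k" using not0_implies_Suc by blast
    show "norm (straddle_sum c sel T - L) \<le> e (block_of T - 1)"
      unfolding e_def using straddle_sum_dist_le[where c = c and D = D, OF sel c_nonneg c_decr k] k by simp
  qed
  ultimately have "(\<lambda>T. straddle_sum c sel T - L) \<longlonglongrightarrow> 0" by (rule Lim_null_comparison[rotated])
  then show ?thesis by (rule LIM_zero_cancel)
qed

definition mate :: "nat \<Rightarrow> nat" where
  "mate n = 2 * partner (n div 2) + n mod 2"

lemma mate_mate: "mate (mate n) = n"
  unfolding mate_def by (simp add: partner_partner)

lemma mate_double: "mate (2 * p) = 2 * partner p" "mate (2 * p + 1) = 2 * partner p + 1"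
  unfolding mate_def by auto

lemma less_mate_iff: "n < mate n \<longleftrightarrow> even (n div 2)"
proof -
  have "n = 2 * (n div 2) + n mod 2" "n mod 2 < 2" by simp_all
  then show ?thesis unfolding mate_def using less_partner_iff[of "n div 2"] by linarith
qed

definition pos_gain :: "nat \<Rightarrow> real" where
  "pos_gain k = 1 / real (Suc k)"

definition neg_gain :: "real \<Rightarrow> nat \<Rightarrow> real" where
  "neg_gain a k = \<bar>a\<bar> / (real (Suc k))^2"

lemma pos_gain_bounds: "0 \<le> pos_gain k" "pos_gain k \<le> 1"
  unfolding pos_gain_def by auto

lemma neg_gain_bounds: "0 \<le> neg_gain a k" "neg_gain a k \<le> \<bar>a\<bar>"
proof -
  show "0 \<le> neg_gain a k" unfolding neg_gain_def by simp
  have "\<bar>a\<bar> / (real (Suc k))^2 \<le> \<bar>a\<bar> / 1" by (intro divide_left_mono) auto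
  then show "neg_gain a k \<le> \<bar>a\<bar>" unfolding neg_gain_def by simp
qed

definition perturbation :: "real \<Rightarrow> nat \<Rightarrow> real" where
  "perturbation a n = (let p = n div 2 in
     if even p then (if odd n then pos_gain (block_of p) else 0)
     else (if even n \<and> partner p \<noteq> p then neg_gain a (block_of (partner p)) else 0))"

lemma perturbation_bounds: "0 \<le> perturbation a n" "perturbation a n \<le> 1 + \<bar>a\<bar>"
  unfolding perturbation_def Let_def using pos_gain_bounds neg_gain_bounds[of a]
  by (auto simp: add_increasing add_increasing2)

text \<open>The factor \<open>|a| + 3\<close> exceeds the spread \<open>1 + |a|\<close> of the perturbations by more than \<open>1\<close>,
  so values at indices from different pairs are at least \<open>1\<close> apart.\<close>

definition witness_seq :: "real \<Rightarrow> nat \<Rightarrow> real" where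
  "witness_seq a n = (\<bar>a\<bar> + 3) * real (min n (mate n)) + perturbation a n"

lemma witness_seq_nonneg: "0 \<le> witness_seq a n"
  unfolding witness_seq_def using perturbation_bounds[of a n] by simp

lemma witness_seq_close_imp_mate:
  assumes "\<bar>witness_seq a i - witness_seq a j\<bar> < 1"
  shows "j = i \<or> j = mate i"
proof -
  let ?C = "\<bar>a\<bar> + 3" and ?d = "real (min i (mate i)) - real (min j (mate j))"
    and ?e = "perturbation a i - perturbation a j"
  have "\<bar>?e\<bar> \<le> 1 + \<bar>a\<bar>"
    using perturbation_bounds[of a i] perturbation_bounds[of a j] by (simp add: abs_le_iff)
  moreover have "witness_seq a i - witness_seq a j = ?C * ?d + ?e"
    unfolding witness_seq_def by (simp add: algebra_simps)
  with assms have "\<bar>?C * ?d + ?e\<bar> < 1" by simp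
  moreover have "\<bar>?C * ?d\<bar> \<le> \<bar>?C * ?d + ?e\<bar> + \<bar>?e\<bar>"
    using abs_triangle_ineq[of "?C * ?d + ?e" "- ?e"] by (simp add: abs_minus_commute)
  moreover have "\<bar>?C * ?d\<bar> = ?C * \<bar>?d\<bar>" by (simp add: abs_mult)
  ultimately have "?C * \<bar>?d\<bar> < ?C" by linarith
  then have "\<bar>?d\<bar> < 1"
    using mult_left_less_imp_less[of ?C "\<bar>?d\<bar>" 1] by (simp add: add.commute)
  then have "min j (mate j) = min i (mate i)"
    by (cases "min i (mate i) \<le> min j (mate j)") linarith+
  then show ?thesis by (metis mate_mate min_def)
qed

lemma witness_seq_mate_diff:
  assumes "n < mate n"
  shows "witness_seq a n - witness_seq a (mate n) =
    (if odd n then pos_gain (block_of (n div 2)) else - neg_gain a (block_of (n div 2)))"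
proof -
  let ?p = "n div 2"
  have ev: "even ?p" using assms less_mate_iff by simp
  have q: "mate n div 2 = partner ?p" "odd (partner ?p)" "partner (partner ?p) \<noteq> partner ?p"
    using partner_even_props[OF ev] partner_partner[of ?p] ev unfolding mate_def by auto
  have "even (mate n) \<longleftrightarrow> even n" unfolding mate_def by simp
  with ev q have "perturbation a (mate n) = (if even n then neg_gain a (block_of ?p) else 0)"
    unfolding perturbation_def Let_def by (simp add: partner_partner)
  moreover have "perturbation a n = (if odd n then pos_gain (block_of ?p) else 0)"
    unfolding perturbation_def Let_def using ev by simp
  moreover have "min (mate n) (mate (mate n)) = min n (mate n)"
    by (simp add: mate_mate min.commute)
  ultimately show ?thesis unfolding witness_seq_def by simp
qed

lemma sum_straddling_mates:
  "(\<Sum>i | i < N \<and> N \<le> mate i \<and> Q i. witness_seq a i - witness_seq a (mate i)) =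
     straddle_sum pos_gain (\<lambda>p. Q (2 * p + 1)) (N div 2)
     - straddle_sum (neg_gain a) (\<lambda>p. Q (2 * p)) ((N + 1) div 2)"
proof -
  let ?W = "{i. i < N \<and> N \<le> mate i \<and> Q i}"
  have even_if: "even p" if "p < partner p" for p
    using that less_partner_iff by blast
  have evens: "{p. 2 * p \<in> ?W} =
      {p. p < (N + 1) div 2 \<and> even p \<and> Q (2 * p) \<and> (N + 1) div 2 \<le> partner p}"
  proof (intro Collect_cong)
    fix p
    have "2 * p < N \<Longrightarrow> N \<le> 2 * partner p \<Longrightarrow> even p" by (intro even_if) linarith
    then show "2 * p \<in> ?W \<longleftrightarrow> p < (N + 1) div 2 \<and> even p \<and> Q (2 * p) \<and> (N + 1) div 2 \<le> partner p"
      unfolding double_vs_half(1,2)[symmetric] by (auto simp: mate_double)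
  qed
  have odds: "{p. 2 * p + 1 \<in> ?W} =
      {p. p < N div 2 \<and> even p \<and> Q (2 * p + 1) \<and> N div 2 \<le> partner p}"
  proof (intro Collect_cong)
    fix p
    have "2 * p + 1 < N \<Longrightarrow> N \<le> 2 * partner p + 1 \<Longrightarrow> even p" by (intro even_if) linarith
    then show "2 * p + 1 \<in> ?W \<longleftrightarrow> p < N div 2 \<and> even p \<and> Q (2 * p + 1) \<and> N div 2 \<le> partner p"
      unfolding double_vs_half(3,4)[symmetric] using mate_double(2)[of p] by auto
  qed
  have "finite ?W" by (rule finite_subset[of _ "{..<N}"]) auto
  then have "(\<Sum>i\<in>?W. witness_seq a i - witness_seq a (mate i)) =
      (\<Sum>p | 2 * p \<in> ?W. witness_seq a (2 * p) - witness_seq a (mate (2 * p)))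
      + (\<Sum>p | 2 * p + 1 \<in> ?W. witness_seq a (2 * p + 1) - witness_seq a (mate (2 * p + 1)))"
    by (rule sum_split_parity)
  also have "(\<Sum>p | 2 * p \<in> ?W. witness_seq a (2 * p) - witness_seq a (mate (2 * p))) =
      - straddle_sum (neg_gain a) (\<lambda>p. Q (2 * p)) ((N + 1) div 2)"
    unfolding evens straddle_sum_def sum_negf[symmetric]
    by (intro sum.cong) (auto simp: witness_seq_mate_diff less_mate_iff)
  also have "(\<Sum>p | 2 * p + 1 \<in> ?W. witness_seq a (2 * p + 1) - witness_seq a (mate (2 * p + 1))) =
      straddle_sum pos_gain (\<lambda>p. Q (2 * p + 1)) (N div 2)"
    unfolding odds straddle_sum_def
    by (intro sum.cong) (auto simp: witness_seq_mate_diff less_mate_iff)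
  finally show ?thesis by simp
qed

lemma straddle_sum_neg_gain_tendsto: "straddle_sum (neg_gain a) (\<lambda>_. True) \<longlonglongrightarrow> \<bar>a\<bar>"
proof (rule straddle_sum_tendsto[where D = "\<lambda>k. (Suc k)^2"])
  have capped: "capped (\<lambda>k. (Suc k)^2) k = (Suc k)^2" for k unfolding capped_def by simp
  show "True \<longleftrightarrow> slot p < (Suc (block_of p))^2" if "even p" for p
    using that by (metis even_decomp slot_even)
  show "0 \<le> neg_gain a k" for k by (rule neg_gain_bounds)
  show "neg_gain a (Suc k) \<le> neg_gain a k" for k
    unfolding neg_gain_def by (intro divide_left_mono) (auto intro: power_mono)
  have "(\<lambda>k. \<bar>a\<bar> * (inverse (real (Suc k)))^2) \<longlonglongrightarrow> \<bar>a\<bar> * 0^2"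
    by (intro tendsto_mult tendsto_const tendsto_power LIMSEQ_inverse_real_of_nat)
  then show "neg_gain a \<longlonglongrightarrow> 0"
    unfolding neg_gain_def by (simp add: divide_inverse power_inverse)
  show "(\<lambda>k. neg_gain a k * real (capped (\<lambda>k. (Suc k)^2) k)) \<longlonglongrightarrow> \<bar>a\<bar>"
    unfolding capped neg_gain_def by simp
  have "(\<lambda>k. \<bar>a\<bar> - \<bar>a\<bar> * (real (Suc k) / real (Suc (Suc k)))^2) \<longlonglongrightarrow> \<bar>a\<bar> - \<bar>a\<bar> * 1^2"
    by (intro tendsto_diff tendsto_mult tendsto_const tendsto_power LIMSEQ_Suc[OF LIMSEQ_n_over_Suc_n])
  moreover have "(neg_gain a k - neg_gain a (Suc k)) * real (capped (\<lambda>k. (Suc k)^2) k)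
      = \<bar>a\<bar> - \<bar>a\<bar> * (real (Suc k) / real (Suc (Suc k)))^2" for k
    unfolding capped neg_gain_def by (simp add: field_simps power_divide)
  ultimately show "(\<lambda>k. (neg_gain a k - neg_gain a (Suc k)) * real (capped (\<lambda>k. (Suc k)^2) k)) \<longlonglongrightarrow> 0"
    by simp
qed

definition pos_quota :: "real \<Rightarrow> nat \<Rightarrow> nat" where
  "pos_quota t k = nat \<lfloor>t * real (Suc k)\<rfloor>"

definition pos_selected :: "real \<Rightarrow> nat \<Rightarrow> bool" where
  "pos_selected t p \<longleftrightarrow> slot p < pos_quota t (block_of p)"

lemma capped_pos_quota_le:
  assumes "0 \<le> t"
  shows "real (capped (pos_quota t) k) \<le> t * real (Suc k)"
proof -
  have "real (capped (pos_quota t) k) \<le> real (pos_quota t k)" unfolding capped_def by simp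
  also have "\<dots> \<le> t * real (Suc k)"
    unfolding pos_quota_def using assms floor_correct[of "t * real (Suc k)"] by simp
  finally show ?thesis .
qed

lemma capped_pos_quota_ge:
  assumes "0 \<le> t" "t \<le> real (Suc k)"
  shows "t * real (Suc k) - 1 \<le> real (capped (pos_quota t) k)"
proof -
  let ?x = "t * real (Suc k)"
  have "?x \<le> real (Suc k) * real (Suc k)" using assms by (intro mult_right_mono) auto
  then have "?x \<le> real ((Suc k)^2)" by (simp only: of_nat_power power2_eq_square of_nat_mult)
  then have "\<lfloor>?x\<rfloor> \<le> int ((Suc k)^2)" by (metis floor_mono floor_of_nat)
  then have "nat \<lfloor>?x\<rfloor> \<le> (Suc k)^2" by (simp add: nat_le_iff)
  then have "capped (pos_quota t) k = nat \<lfloor>?x\<rfloor>" unfolding capped_def pos_quota_def by simp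
  moreover have "?x < real_of_int \<lfloor>?x\<rfloor> + 1" "real (nat \<lfloor>?x\<rfloor>) = real_of_int \<lfloor>?x\<rfloor>"
    using floor_correct[of ?x] assms by simp_all
  ultimately show ?thesis by linarith
qed

lemma pos_gain_tendsto_zero: "pos_gain \<longlonglongrightarrow> 0"
  using LIMSEQ_inverse_real_of_nat unfolding pos_gain_def by (simp add: divide_inverse)

lemma pos_gain_capped_pos_quota_tendsto:
  assumes t: "0 \<le> t"
  shows "(\<lambda>k. pos_gain k * real (capped (pos_quota t) k)) \<longlonglongrightarrow> t"
proof (rule tendsto_sandwich[where f = "\<lambda>k. t - pos_gain k" and h = "\<lambda>k. t"])
  show "eventually (\<lambda>k. pos_gain k * real (capped (pos_quota t) k) \<le> t) sequentially"
  proof (intro always_eventually allI)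
    fix k
    have "pos_gain k * real (capped (pos_quota t) k) \<le> pos_gain k * (t * real (Suc k))"
      by (intro mult_left_mono capped_pos_quota_le t pos_gain_bounds)
    then show "pos_gain k * real (capped (pos_quota t) k) \<le> t" unfolding pos_gain_def by simp
  qed
  obtain K :: nat where K: "t \<le> real K" using real_arch_simple by blast
  show "eventually (\<lambda>k. t - pos_gain k \<le> pos_gain k * real (capped (pos_quota t) k)) sequentially"
  proof (rule eventually_sequentiallyI[of K])
    fix k assume "K \<le> k"
    with K have "t \<le> real (Suc k)" by linarith
    from mult_left_mono[OF capped_pos_quota_ge[OF t this] pos_gain_bounds(1)[of k]]
    show "t - pos_gain k \<le> pos_gain k * real (capped (pos_quota t) k)"
      unfolding pos_gain_def by (simp add: field_simps)
  qed
  show "(\<lambda>k. t - pos_gain k) \<longlonglongrightarrow> t"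
    using tendsto_diff[OF tendsto_const pos_gain_tendsto_zero] by simp
qed simp

lemma pos_gain_decrement_capped_pos_quota_tendsto:
  assumes t: "0 \<le> t"
  shows "(\<lambda>k. (pos_gain k - pos_gain (Suc k)) * real (capped (pos_quota t) k)) \<longlonglongrightarrow> 0"
proof (rule tendsto_sandwich[where f = "\<lambda>k. 0" and h = "\<lambda>k. t * pos_gain (Suc k)"])
  have diff: "pos_gain k - pos_gain (Suc k) = pos_gain (Suc k) / real (Suc k)" for k
    unfolding pos_gain_def by (simp add: field_simps)
  have decr: "0 \<le> pos_gain k - pos_gain (Suc k)" for k
    unfolding pos_gain_def by (simp add: frac_le)
  then show "eventually (\<lambda>k. 0 \<le> (pos_gain k - pos_gain (Suc k)) * real (capped (pos_quota t) k))
      sequentially"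
    by (intro always_eventually allI mult_nonneg_nonneg) auto
  show "eventually (\<lambda>k. (pos_gain k - pos_gain (Suc k)) * real (capped (pos_quota t) k)
      \<le> t * pos_gain (Suc k)) sequentially"
  proof (intro always_eventually allI)
    fix k
    from mult_left_mono[OF capped_pos_quota_le[OF t, of k] decr[of k]]
    show "(pos_gain k - pos_gain (Suc k)) * real (capped (pos_quota t) k) \<le> t * pos_gain (Suc k)"
      unfolding diff by (simp add: mult.commute)
  qed
  show "(\<lambda>k. t * pos_gain (Suc k)) \<longlonglongrightarrow> 0"
    using tendsto_mult[OF tendsto_const LIMSEQ_Suc[OF pos_gain_tendsto_zero], of t] by simp
qed simp

lemma straddle_sum_pos_gain_tendsto:
  assumes "0 \<le> t"
  shows "straddle_sum pos_gain (pos_selected t) \<longlonglongrightarrow> t"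
proof (rule straddle_sum_tendsto[where D = "pos_quota t"])
  show "pos_selected t p \<longleftrightarrow> slot p < pos_quota t (block_of p)" for p
    unfolding pos_selected_def ..
  show "0 \<le> pos_gain k" for k by (rule pos_gain_bounds)
  show "pos_gain (Suc k) \<le> pos_gain k" for k unfolding pos_gain_def by (simp add: frac_le)
qed (use assms pos_gain_tendsto_zero pos_gain_capped_pos_quota_tendsto
       pos_gain_decrement_capped_pos_quota_tendsto in auto)

definition swap_perm :: "real \<Rightarrow> nat \<Rightarrow> nat" where
  "swap_perm t n =
    (if even (min n (mate n)) \<or> pos_selected t (min n (mate n) div 2) then mate n else n)"

lemma swap_perm_cases: "swap_perm t n = n \<or> swap_perm t n = mate n"
  unfolding swap_perm_def by auto

lemma swap_perm_swap_perm: "swap_perm t (swap_perm t n) = n"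
proof -
  have "min (mate n) (mate (mate n)) = min n (mate n)" by (simp add: mate_mate min.commute)
  then show ?thesis unfolding swap_perm_def by (simp add: mate_mate)
qed

lemma bij_swap_perm: "bij (swap_perm t)"
  by (rule o_bij[of "swap_perm t"]) (auto simp: swap_perm_swap_perm)

lemma eventually_partial_sum_swap_perm:
  "eventually (\<lambda>N. (\<Sum>n<N. witness_seq a n - witness_seq a (swap_perm t n)) =
     straddle_sum pos_gain (pos_selected t) (N div 2)
     - straddle_sum (neg_gain a) (\<lambda>_. True) ((N + 1) div 2)) sequentially"
proof -
  have swapped: "{i. i < N \<and> swap_perm t i = mate i \<and> N \<le> mate i} =
      {i. i < N \<and> N \<le> mate i \<and> (even i \<or> pos_selected t (i div 2))}" for N
    unfolding swap_perm_def by (auto simp: min_def)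
  show ?thesis
    using eventually_partial_sum_eq_swapped_pairs[OF bij_swap_perm mate_mate
        always_eventually[OF allI[OF swap_perm_cases]], of "witness_seq a" t]
    by (rule eventually_mono) (simp add: swapped sum_straddling_mates)
qed

lemma witness_seq_swap_perm_sums:
  assumes "0 \<le> t"
  shows "(\<lambda>n. witness_seq a n - witness_seq a (swap_perm t n)) sums (t - \<bar>a\<bar>)"
proof -
  have "(\<lambda>N. straddle_sum pos_gain (pos_selected t) ((N + 0) div 2)
      - straddle_sum (neg_gain a) (\<lambda>_. True) ((N + 1) div 2)) \<longlonglongrightarrow> t - \<bar>a\<bar>"
    by (intro tendsto_diff filterlim_compose[OF _ filterlim_half_at_top]
        straddle_sum_pos_gain_tendsto assms straddle_sum_neg_gain_tendsto)
  with tendsto_cong[OF eventually_partial_sum_swap_perm[of a t]] show ?thesis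
    unfolding sums_def by simp
qed

lemma witness_seq_perm_suminf_ge:
  assumes bij: "bij \<sigma>" and summable: "summable (\<lambda>n. witness_seq a n - witness_seq a (\<sigma> n))"
  shows "- \<bar>a\<bar> \<le> (\<Sum>n. witness_seq a n - witness_seq a (\<sigma> n))"
proof -
  let ?f = "\<lambda>n. witness_seq a n - witness_seq a (\<sigma> n)"
  have "?f \<longlonglongrightarrow> 0" using summable by (rule summable_LIMSEQ_zero)
  then have "eventually (\<lambda>n. \<bar>?f n\<bar> < 1) sequentially"
    using tendsto_iff[THEN iffD1, rule_format, of ?f 0 _ 1] by simp
  then have "eventually (\<lambda>n. \<sigma> n = n \<or> \<sigma> n = mate n) sequentially"
    by eventually_elim (use witness_seq_close_imp_mate in blast)
  from eventually_partial_sum_eq_swapped_pairs[OF bij mate_mate this, of "witness_seq a"]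
  have "eventually (\<lambda>N. - straddle_sum (neg_gain a) (\<lambda>_. True) ((N + 1) div 2) \<le> (\<Sum>n<N. ?f n)) sequentially"
  proof eventually_elim
    case (elim N)
    have "{i. i < N \<and> \<sigma> i = mate i \<and> N \<le> mate i} = {i. i < N \<and> N \<le> mate i \<and> \<sigma> i = mate i}"
      by blast
    with elim have "(\<Sum>n<N. ?f n) =
        straddle_sum pos_gain (\<lambda>p. \<sigma> (2 * p + 1) = mate (2 * p + 1)) (N div 2)
        - straddle_sum (neg_gain a) (\<lambda>p. \<sigma> (2 * p) = mate (2 * p)) ((N + 1) div 2)"
      by (simp add: sum_straddling_mates)
    moreover have "0 \<le> straddle_sum pos_gain (\<lambda>p. \<sigma> (2 * p + 1) = mate (2 * p + 1)) (N div 2)"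
      using pos_gain_bounds by (intro straddle_sum_nonneg)
    moreover have "straddle_sum (neg_gain a) (\<lambda>p. \<sigma> (2 * p) = mate (2 * p)) ((N + 1) div 2)
        \<le> straddle_sum (neg_gain a) (\<lambda>_. True) ((N + 1) div 2)"
      by (rule straddle_sum_mono_sel) (simp_all add: neg_gain_bounds)
    ultimately show ?case by linarith
  qed
  moreover have "(\<lambda>N. - straddle_sum (neg_gain a) (\<lambda>_. True) ((N + 1) div 2)) \<longlonglongrightarrow> - \<bar>a\<bar>"
    by (intro tendsto_minus filterlim_compose[OF straddle_sum_neg_gain_tendsto filterlim_half_at_top])
  moreover have "(\<lambda>N. \<Sum>n<N. ?f n) \<longlonglongrightarrow> (\<Sum>n. ?f n)"
    using summable_sums[OF summable] unfolding sums_def .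
  ultimately show ?thesis by (intro tendsto_le[OF trivial_limit_sequentially]) auto
qed

theorem mainTheorem4:
  fixes a :: real
  assumes "a \<le> 0"
  shows "\<exists>x :: nat \<Rightarrow> real. (\<forall>n. x n > 0) \<and> \<not> summable x \<and>
    {(\<Sum>n. x n - x (\<sigma> n)) | \<sigma>. bij \<sigma> \<and> summable (\<lambda>n. x n - x (\<sigma> n))} = {a..}"
proof (intro exI conjI)
  let ?x = "\<lambda>n. 1 + witness_seq a n"
  show "\<forall>n. ?x n > 0" using witness_seq_nonneg by (simp add: add_pos_nonneg)
  show "\<not> summable ?x"
  proof
    assume "summable ?x"
    then have "?x \<longlonglongrightarrow> 0" by (rule summable_LIMSEQ_zero)
    then show False using witness_seq_nonneg LIMSEQ_le_const[of ?x 0 1] by force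
  qed
  have diff: "(\<lambda>n. ?x n - ?x (\<sigma> n)) = (\<lambda>n. witness_seq a n - witness_seq a (\<sigma> n))" for \<sigma>
    by simp
  have "s \<in> {(\<Sum>n. ?x n - ?x (\<sigma> n)) | \<sigma>. bij \<sigma> \<and> summable (\<lambda>n. ?x n - ?x (\<sigma> n))}"
    if "a \<le> s" for s
  proof -
    have "(\<lambda>n. witness_seq a n - witness_seq a (swap_perm (s - a) n)) sums s"
      using witness_seq_swap_perm_sums[of "s - a" a] that assms by simp
    then show ?thesis
      unfolding diff by (intro CollectI exI[of _ "swap_perm (s - a)"]) (simp add: sums_iff bij_swap_perm)
  qed
  then show "{(\<Sum>n. ?x n - ?x (\<sigma> n)) | \<sigma>. bij \<sigma> \<and> summable (\<lambda>n. ?x n - ?x (\<sigma> n))} = {a..}"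
    using witness_seq_perm_suminf_ge[of _ a] assms unfolding diff by fastforce
qed

end
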